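(* Let $d\ge2$, $\mathbf u,\mathbf w\in\mathcal C_{d-1}$ with $\bar w_i>0$ for all $i\in\{1,\dots,d\}$, and $\mathbf r\in[0,1]^d\setminus\{\mathbf 0\}$. For $f(\mathbf x)=-\log\langle\mathbf r,\bar{\mathbf x}\rangle$, we have $$|\langle\nabla f(\mathbf w),\mathbf u-\mathbf w\rangle|\le 1\vee\max_{i\in[d]}\frac{\bar u_i}{\bar w_i}.$$
   Context: $\mathcal C_{d-1}=\{\mathbf u\in\mathbb R^{d-1}:u_i\ge0,\ \sum_iu_i\le1\}$. For $\mathbf v\in\mathbb R^{d-1}$, $\bar{\mathbf v}=(v_1,\dots,v_{d-1},1-\sum_{i=1}^{d-1}v_i)\in\mathbb R^d$. $a\vee b=\max(a,b)$ and $[d]=\{1,\dots,d\}$. *)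

theory Defs
  imports "HOL-Analysis.Analysis"
begin

text \<open>R^(d-1) is modelled as real^'n (d - 1 = CARD('n), so d \<ge> 2 automatically);
  R^d is modelled as real^('n option), the extra index None being the d-th coordinate.\<close>

definition simplexC :: "(real^'n) set" where
  "simplexC = {u. (\<forall>i. 0 \<le> u $ i) \<and> (\<Sum>i\<in>UNIV. u $ i) \<le> 1}"

definition bar :: "real^'n \<Rightarrow> real^('n option)" where
  "bar v = (\<chi> i. case i of Some j \<Rightarrow> v $ j | None \<Rightarrow> 1 - (\<Sum>j\<in>UNIV. v $ j))"

definition grad :: "(real^'n \<Rightarrow> real) \<Rightarrow> real^'n \<Rightarrow> real^'n" where
  "grad f x = (SOME g. (f has_derivative (\<lambda>h. g \<bullet> h)) (at x))"

end

theory Submission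
  imports Defs
begin

text \<open>The map \<open>x \<mapsto> \<langle>r, bar x\<rangle>\<close> is affine, \<open>c + \<langle>a, x\<rangle>\<close>, so the gradient of
  \<open>f = -log \<langle>r, bar x\<rangle>\<close> at \<open>w\<close> is \<open>-a / \<langle>r, bar w\<rangle>\<close> and
  \<open>\<langle>\<nabla>f(w), u - w\<rangle> = 1 - \<langle>r, bar u\<rangle> / \<langle>r, bar w\<rangle>\<close>.  Since \<open>r\<close> is nonnegative, the quotient
  lies between \<open>0\<close> and the largest coordinate ratio \<open>M\<close> of \<open>bar u\<close> to \<open>bar w\<close>, and
  \<open>|1 - t| \<le> max 1 M\<close> for \<open>t \<in> [0, M]\<close>.\<close>

lemma sum_UNIV_option:
  fixes f :: "'a::finite option \<Rightarrow> 'b::comm_monoid_add"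
  shows "(\<Sum>i\<in>UNIV. f i) = f None + (\<Sum>j\<in>UNIV. f (Some j))"
proof -
  have "(\<Sum>i\<in>UNIV. f i) = f None + (\<Sum>i\<in>range Some. f i)"
    by (simp add: UNIV_option_conv)
  also have "(\<Sum>i\<in>range Some. f i) = (\<Sum>j\<in>UNIV. f (Some j))"
    by (simp add: sum.reindex)
  finally show ?thesis .
qed

lemma inner_bar:
  fixes r :: "real^('n::finite option)"
  shows "r \<bullet> bar x = r $ None + (\<chi> j. r $ Some j - r $ None) \<bullet> x"
  unfolding inner_vec_def bar_def
  by (simp add: sum_UNIV_option algebra_simps sum_distrib_left sum_subtractf)

lemma bar_nonneg:
  assumes "u \<in> simplexC"
  shows "0 \<le> bar u $ i"
  using assms unfolding simplexC_def bar_def by (auto split: option.splits)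

lemma grad_eqI:
  assumes "(f has_derivative (\<lambda>h. g \<bullet> h)) (at x)"
  shows "grad f x = g"
proof -
  have "(f has_derivative (\<lambda>h. grad f x \<bullet> h)) (at x)"
    unfolding grad_def using assms by (rule someI)
  then have "(\<lambda>h. grad f x \<bullet> h) = (\<lambda>h. g \<bullet> h)"
    using assms has_derivative_unique by blast
  then have "(grad f x - g) \<bullet> (grad f x - g) = 0"
    by (metis inner_diff_left right_minus_eq)
  then show ?thesis by simp
qed

lemma grad_neg_ln_affine:
  fixes a w :: "real^'n"
  assumes "0 < c + a \<bullet> w"
  shows "grad (\<lambda>x. - ln (c + a \<bullet> x)) w = - (1 / (c + a \<bullet> w)) *\<^sub>R a"
proof (rule grad_eqI)
  have "((\<lambda>x. c + a \<bullet> x) has_derivative (\<lambda>h. a \<bullet> h)) (at w)"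
    by (auto intro!: derivative_eq_intros)
  moreover have "(ln has_derivative (\<lambda>y. inverse (c + a \<bullet> w) * y)) (at (c + a \<bullet> w))"
    using DERIV_ln[OF assms] unfolding has_field_derivative_def .
  ultimately have "((\<lambda>x. ln (c + a \<bullet> x)) has_derivative (\<lambda>h. inverse (c + a \<bullet> w) * (a \<bullet> h))) (at w)"
    by (rule has_derivative_compose)
  from has_derivative_minus[OF this]
  show "((\<lambda>x. - ln (c + a \<bullet> x)) has_derivative (\<lambda>h. (- (1 / (c + a \<bullet> w)) *\<^sub>R a) \<bullet> h)) (at w)"
    by (simp add: divide_inverse)
qed

lemma inner_pos_if_nonneg_nonzero:
  fixes r v :: "real^'n"
  assumes "\<forall>i. 0 \<le> r $ i" and "r \<noteq> 0" and "\<forall>i. 0 < v $ i"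
  shows "0 < r \<bullet> v"
proof -
  obtain k where "r $ k \<noteq> 0" using assms(2) by (metis vec_eq_iff zero_index)
  then have "0 < r $ k * v $ k" using assms by (simp add: order_less_le)
  also have "\<dots> \<le> (\<Sum>i\<in>UNIV. r $ i * v $ i)"
    by (rule member_le_sum) (use assms in \<open>auto simp: less_imp_le\<close>)
  finally show ?thesis by (simp add: inner_vec_def)
qed

lemma inner_le_Max_ratio_mult:
  fixes r u w :: "real^'n"
  assumes "\<forall>i. 0 \<le> r $ i" and "\<forall>i. 0 < w $ i"
  shows "r \<bullet> u \<le> Max {u $ i / w $ i | i. i \<in> UNIV} * (r \<bullet> w)"
proof -
  define M where "M = Max {u $ i / w $ i | i. i \<in> UNIV}"
  have "r $ i * u $ i \<le> M * (r $ i * w $ i)" for i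
  proof -
    have "u $ i / w $ i \<le> M" unfolding M_def by (rule Max_ge) (auto simp: full_SetCompr_eq)
    then have "u $ i \<le> M * w $ i" using assms(2) by (simp add: divide_le_eq)
    then show ?thesis using assms(1) by (metis mult.left_commute mult_left_mono)
  qed
  then have "(\<Sum>i\<in>UNIV. r $ i * u $ i) \<le> M * (\<Sum>i\<in>UNIV. r $ i * w $ i)"
    by (simp add: sum_distrib_left sum_mono)
  then show ?thesis unfolding M_def inner_vec_def by simp
qed

theorem lemma16:
  fixes u w :: "real^'n" and r :: "real^('n option)"
  assumes "u \<in> simplexC" and "w \<in> simplexC"
    and "\<forall>i. bar w $ i > 0"
    and "\<forall>i. 0 \<le> r $ i \<and> r $ i \<le> 1" and "r \<noteq> 0"
  shows "\<bar>grad (\<lambda>x. - ln (r \<bullet> bar x)) w \<bullet> (u - w)\<bar>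
           \<le> max 1 (Max {bar u $ i / bar w $ i | i. i \<in> UNIV})"
proof -
  define a :: "real^'n" where "a = (\<chi> j. r $ Some j - r $ None)"
  define D where "D = r \<bullet> bar w"
  define N where "N = r \<bullet> bar u"
  define M where "M = Max {bar u $ i / bar w $ i | i. i \<in> UNIV}"
  have r_nonneg: "\<forall>i. 0 \<le> r $ i" using assms(4) by simp
  have D_pos: "0 < D"
    unfolding D_def using inner_pos_if_nonneg_nonzero r_nonneg assms(5,3) by blast
  have affine: "r \<bullet> bar x = r $ None + a \<bullet> x" for x
    unfolding a_def by (rule inner_bar)
  have "grad (\<lambda>x. - ln (r \<bullet> bar x)) w = - (1 / D) *\<^sub>R a"
    using grad_neg_ln_affine[of "r $ None" a w] D_pos by (simp add: affine D_def)
  moreover have "a \<bullet> (u - w) = N - D"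
    by (simp add: N_def D_def affine inner_diff_right)
  ultimately have "grad (\<lambda>x. - ln (r \<bullet> bar x)) w \<bullet> (u - w) = 1 - N / D"
    using D_pos by (simp add: diff_divide_distrib)
  moreover have "0 \<le> N / D"
    using D_pos r_nonneg bar_nonneg[OF assms(1)]
    by (simp add: N_def inner_vec_def sum_nonneg)
  moreover have "N / D \<le> M"
    using inner_le_Max_ratio_mult[OF r_nonneg assms(3)] D_pos
    by (simp add: N_def D_def M_def divide_le_eq)
  ultimately show ?thesis unfolding M_def by linarith
qed

end
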